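(* Let $A$ be a setoid, $B$ a setoid family over $A$ and $(C,a_C)$ a $P_B$-algebra. Let $w:W$ and $k,k':\mathsf{ImS}\,w\Rightarrow C$. Then there is a term of type \[ \mathsf{RecDef}\,w\,k\to\mathsf{RecDef}\,w\,k'\to k\approx k'. \]
   Context: Setting: intensional Martin-Löf type theory with $\Pi$-types, record types and a universe $\mathsf U$ closed under $\Pi$ and containing intensional $\Sigma$-types, identity types, unit type, W-types and dependent W-types; propositions-as-types. For a W-type with constructor $\mathsf{sup}$, $\mathsf n,\mathsf b$ are node and branch functions. $\mathsf{DW}_{I,X,Y,d}:I\to\mathsf U$ denotes the dependent W-type: the inductive family with constructor $\mathsf{dsup}\,i\,x\,f:\mathsf{DW}\,i$ for $x:X\,i$ and $f:\prod_{y:Y\,i\,x}\mathsf{DW}(d\,i\,x\,y)$, and the usual dependent eliminator. A setoid $X$: type $X_0:\mathsf U$ with relation $\approx_X$ and proofs of reflexivity, symmetry, transitivity; $x:X$ means $x:X_0$. Extensional function $f:X\Rightarrow Y$: $f_0:X_0\to Y_0$ with a proof that it preserves $\approx$; $X\Rightarrow Y$ is a setoid with pointwise equality; $\circ$ is composition. A setoid family $B$ over setoid $A$: setoids $B\,a$ and transports $B_\alpha:B\,a\Rightarrow B\,a'$ for $\alpha:a\approx_Aa'$, functorial up to $\approx$, with $B_\alpha\approx B_{\alpha'}$ for all $\alpha,\alpha'$. Write $b\approx_\alpha b'$ for $B_\alpha b\approx b'$. $P_BX$: setoid with underlying type $\sum_{a:A}(B\,a\Rightarrow X)$ and $(a,k)\approx(a',k'):=\sum_{\alpha:a\approx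 a'}k\approx k'\circ B_\alpha$. A $P_B$-algebra is a setoid $C$ with extensional $a_C:P_BC\Rightarrow C$. $W$: with $A_0,B_0$ underlying types and $\mathsf W:=\mathsf W(A_0,B_0)$, $\approx^Bw\,w':=\mathsf{DW}_{I,X,Y,d}(w,w')$ with $I:=\mathsf W\times\mathsf W$, $X(w,w'):=\mathsf nw\approx_A\mathsf nw'$, $Y(w,w')\alpha:=\sum_{b,b'}b\approx_\alpha b'$, $d(w,w')\alpha(b,b',\beta):=(\mathsf bwb,\mathsf bw'b')$. $W$: underlying type $\sum_{w:\mathsf W}\approx^Bw\,w$, $(w,\_)\approx_W(w',\_):=\approx^Bw\,w'$. $\mathsf n$, $\mathsf b$ induce extensional $\mathsf n:W\Rightarrow A$ and $\mathsf b\,w:B(\mathsf nw)\Rightarrow W$. $\mathsf{ImS}\,w$ (for $w:W$): setoid with underlying type $B_0(\mathsf nw)$ and $b\approx b':=\mathsf bwb\approx_W\mathsf bwb'$; for $\sigma:s\approx s'$ in $\mathsf{ImS}\,w$, $\mathsf{ImS}_\sigma$ denotes transport $B_{\mathsf n^\ast\sigma}$ along the induced $\mathsf n(\mathsf bws)\approx_A\mathsf n(\mathsf bws')$. $e_w:B(\mathsf nw)\Rightarrow\mathsf{ImS}\,w$ has identity underlying function. A family $F:\prod_{s:\mathsf{ImS}w}\mathsf{ImS}(\mathsf bws)\Rightarrow C$ is coherent if $F\,s\approx(F\,s')\circ\mathsf{ImS}_\sigma$ for all $\sigma:s\approx s'$; $\mathsf{CohMaps}\,w$ is the setoid of coherent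 families with pointwise equality. For $F:\mathsf{CohMaps}\,w$, $\mathsf{recst}\,w\,F:\mathsf{ImS}\,w\Rightarrow C$ is the extensional function $s\mapsto a_C(\mathsf n(\mathsf bws),(F\,s)\circ e_{\mathsf bws})$. For $k:\mathsf{ImS}\,w\Rightarrow C$, $\mathsf{RecDef}\,w\,k:=\mathsf{DW}_{I',X',Y',d'}(w,k)$ with $I':=\sum_{w:W}(\mathsf{ImS}w\Rightarrow C)$, $X'(w,k):=\sum_{F:\mathsf{CohMaps}w}k\approx\mathsf{recst}\,w\,F$, $Y'(w,k)(F,\_):=$ underlying type of $\mathsf{ImS}\,w$, $d'(w,k)(F,\_)s:=(\mathsf bws,F\,s)$. *)

theory Defs
  imports Main
begin

text \<open>Setoids are modelled proof-irrelevantly: a carrier set together with a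
  relation (only relating carrier elements) that is an equivalence on the carrier.\<close>

definition setoid :: "'a set \<Rightarrow> ('a \<Rightarrow> 'a \<Rightarrow> bool) \<Rightarrow> bool" where
  "setoid X r \<longleftrightarrow> (\<forall>x y. r x y \<longrightarrow> x \<in> X \<and> y \<in> X) \<and> (\<forall>x\<in>X. r x x)
     \<and> (\<forall>x y. r x y \<longrightarrow> r y x) \<and> (\<forall>x y z. r x y \<longrightarrow> r y z \<longrightarrow> r x z)"

definition ext_fun :: "'a set \<Rightarrow> ('a \<Rightarrow> 'a \<Rightarrow> bool) \<Rightarrow> 'c set \<Rightarrow> ('c \<Rightarrow> 'c \<Rightarrow> bool) \<Rightarrow> ('a \<Rightarrow> 'c) \<Rightarrow> bool" where
  "ext_fun X r Y s f \<longleftrightarrow> (\<forall>x\<in>X. f x \<in> Y) \<and> (\<forall>x y. r x y \<longrightarrow> s (f x) (f y))"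

definition fun_eq :: "'a set \<Rightarrow> ('c \<Rightarrow> 'c \<Rightarrow> bool) \<Rightarrow> ('a \<Rightarrow> 'c) \<Rightarrow> ('a \<Rightarrow> 'c) \<Rightarrow> bool" where
  "fun_eq X s f g \<longleftrightarrow> (\<forall>x\<in>X. s (f x) (g x))"

text \<open>By proof
  irrelevance, transports are indexed by the endpoints, so B_alpha = B_alpha' holds.\<close>
definition setoid_family ::
  "'a set \<Rightarrow> ('a \<Rightarrow> 'a \<Rightarrow> bool) \<Rightarrow> ('a \<Rightarrow> 'b set) \<Rightarrow> ('a \<Rightarrow> 'b \<Rightarrow> 'b \<Rightarrow> bool)
    \<Rightarrow> ('a \<Rightarrow> 'a \<Rightarrow> 'b \<Rightarrow> 'b) \<Rightarrow> bool" where
  "setoid_family A0 eqA B0 eqB tr \<longleftrightarrow>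
     (\<forall>a\<in>A0. setoid (B0 a) (eqB a))
   \<and> (\<forall>a a'. eqA a a' \<longrightarrow> ext_fun (B0 a) (eqB a) (B0 a') (eqB a') (tr a a'))
   \<and> (\<forall>a\<in>A0. fun_eq (B0 a) (eqB a) (tr a a) id)
   \<and> (\<forall>a a' a''. eqA a a' \<longrightarrow> eqA a' a'' \<longrightarrow>
        fun_eq (B0 a) (eqB a'') (tr a' a'' \<circ> tr a a') (tr a a''))"

definition PB_algebra ::
  "'a set \<Rightarrow> ('a \<Rightarrow> 'a \<Rightarrow> bool) \<Rightarrow> ('a \<Rightarrow> 'b set) \<Rightarrow> ('a \<Rightarrow> 'b \<Rightarrow> 'b \<Rightarrow> bool)
    \<Rightarrow> ('a \<Rightarrow> 'a \<Rightarrow> 'b \<Rightarrow> 'b) \<Rightarrow> 'c set \<Rightarrow> ('c \<Rightarrow> 'c \<Rightarrow> bool)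
    \<Rightarrow> ('a \<Rightarrow> ('b \<Rightarrow> 'c) \<Rightarrow> 'c) \<Rightarrow> bool" where
  "PB_algebra A0 eqA B0 eqB tr C0 eqC aC \<longleftrightarrow>
     setoid C0 eqC
   \<and> (\<forall>a\<in>A0. \<forall>k. ext_fun (B0 a) (eqB a) C0 eqC k \<longrightarrow> aC a k \<in> C0)
   \<and> (\<forall>a a' k k'. eqA a a' \<longrightarrow> ext_fun (B0 a) (eqB a) C0 eqC k
        \<longrightarrow> ext_fun (B0 a') (eqB a') C0 eqC k'
        \<longrightarrow> fun_eq (B0 a) eqC k (k' \<circ> tr a a') \<longrightarrow> eqC (aC a k) (aC a' k'))"

text \<open>The W-type W(A0,B0) (branches outside B0 (node w) are junk and ignored).
  HOL types must be nonempty, so an extra junk constructor Junk is added; it is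
  never related by eqWB, hence never an element of the setoid W.\<close>
datatype ('a, 'b) Wt = Sup (node: 'a) (branch: "'b \<Rightarrow> ('a, 'b) Wt") | Junk

inductive eqWB :: "('a \<Rightarrow> 'a \<Rightarrow> bool) \<Rightarrow> ('a \<Rightarrow> 'b set) \<Rightarrow> ('a \<Rightarrow> 'b \<Rightarrow> 'b \<Rightarrow> bool)
    \<Rightarrow> ('a \<Rightarrow> 'a \<Rightarrow> 'b \<Rightarrow> 'b) \<Rightarrow> ('a, 'b) Wt \<Rightarrow> ('a, 'b) Wt \<Rightarrow> bool"
  for eqA B0 eqB tr where
  "eqA a a' \<Longrightarrow>
   (\<And>b b'. b \<in> B0 a \<Longrightarrow> b' \<in> B0 a' \<Longrightarrow>
      eqB a' (tr a a' b) b' \<Longrightarrow>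
      eqWB eqA B0 eqB tr (f b) (f' b')) \<Longrightarrow>
   eqWB eqA B0 eqB tr (Sup a f) (Sup a' f')"

definition imS_eq :: "('a \<Rightarrow> 'a \<Rightarrow> bool) \<Rightarrow> ('a \<Rightarrow> 'b set) \<Rightarrow> ('a \<Rightarrow> 'b \<Rightarrow> 'b \<Rightarrow> bool)
    \<Rightarrow> ('a \<Rightarrow> 'a \<Rightarrow> 'b \<Rightarrow> 'b) \<Rightarrow> ('a, 'b) Wt \<Rightarrow> 'b \<Rightarrow> 'b \<Rightarrow> bool" where
  "imS_eq eqA B0 eqB tr w s s' \<longleftrightarrow> s \<in> B0 (node w) \<and> s' \<in> B0 (node w)
     \<and> eqWB eqA B0 eqB tr (branch w s) (branch w s')"

definition cohmap ::
  "('a \<Rightarrow> 'a \<Rightarrow> bool) \<Rightarrow> ('a \<Rightarrow> 'b set) \<Rightarrow> ('a \<Rightarrow> 'b \<Rightarrow> 'b \<Rightarrow> bool)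
    \<Rightarrow> ('a \<Rightarrow> 'a \<Rightarrow> 'b \<Rightarrow> 'b) \<Rightarrow> 'c set \<Rightarrow> ('c \<Rightarrow> 'c \<Rightarrow> bool)
    \<Rightarrow> ('a, 'b) Wt \<Rightarrow> ('b \<Rightarrow> 'b \<Rightarrow> 'c) \<Rightarrow> bool" where
  "cohmap eqA B0 eqB tr C0 eqC w F \<longleftrightarrow>
     (\<forall>s\<in>B0 (node w). ext_fun (B0 (node (branch w s))) (imS_eq eqA B0 eqB tr (branch w s))
                         C0 eqC (F s))
   \<and> (\<forall>s s'. imS_eq eqA B0 eqB tr w s s' \<longrightarrow>
        fun_eq (B0 (node (branch w s))) eqC (F s)
          (F s' \<circ> tr (node (branch w s)) (node (branch w s'))))"

text \<open>recst w F s = a_C (n (b w s), F s \<circ> e_{b w s}); e has identity underlying function.\<close>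
definition recst :: "('a \<Rightarrow> ('b \<Rightarrow> 'c) \<Rightarrow> 'c) \<Rightarrow> ('a, 'b) Wt \<Rightarrow> ('b \<Rightarrow> 'b \<Rightarrow> 'c) \<Rightarrow> 'b \<Rightarrow> 'c" where
  "recst aC w F s = aC (node (branch w s)) (F s)"

inductive RecDef ::
  "('a \<Rightarrow> 'a \<Rightarrow> bool) \<Rightarrow> ('a \<Rightarrow> 'b set) \<Rightarrow> ('a \<Rightarrow> 'b \<Rightarrow> 'b \<Rightarrow> bool)
    \<Rightarrow> ('a \<Rightarrow> 'a \<Rightarrow> 'b \<Rightarrow> 'b) \<Rightarrow> 'c set \<Rightarrow> ('c \<Rightarrow> 'c \<Rightarrow> bool)
    \<Rightarrow> ('a \<Rightarrow> ('b \<Rightarrow> 'c) \<Rightarrow> 'c) \<Rightarrow> ('a, 'b) Wt \<Rightarrow> ('b \<Rightarrow> 'c) \<Rightarrow> bool"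
  for eqA B0 eqB tr C0 eqC aC where
  "cohmap eqA B0 eqB tr C0 eqC w F \<Longrightarrow>
   fun_eq (B0 (node w)) eqC k (recst aC w F) \<Longrightarrow>
   (\<And>s. s \<in> B0 (node w) \<Longrightarrow> RecDef eqA B0 eqB tr C0 eqC aC (branch w s) (F s)) \<Longrightarrow>
   RecDef eqA B0 eqB tr C0 eqC aC w k"

end

theory Submission
  imports Defs
begin

text \<open>Both \<open>RecDef w k\<close> and \<open>RecDef w k'\<close> unfold one level to coherent families \<open>F\<close>, \<open>F'\<close>
  with \<open>k \<approx> recst w F\<close> and \<open>k' \<approx> recst w F'\<close>.  Induction on the first derivation gives
  \<open>F s \<approx> F' s\<close> for every branch \<open>s\<close>; since \<open>a\<^sub>C\<close> is extensional and the transport along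
  a reflexivity proof is the identity, \<open>recst w F \<approx> recst w F'\<close>, hence \<open>k \<approx> k'\<close>.\<close>

lemma setoid_carrier: "setoid X r \<Longrightarrow> r x y \<Longrightarrow> x \<in> X \<and> y \<in> X"
  unfolding setoid_def by blast

lemma setoid_refl: "setoid X r \<Longrightarrow> x \<in> X \<Longrightarrow> r x x"
  unfolding setoid_def by blast

lemma setoid_sym: "setoid X r \<Longrightarrow> r x y \<Longrightarrow> r y x"
  unfolding setoid_def by blast

lemma setoid_trans: "setoid X r \<Longrightarrow> r x y \<Longrightarrow> r y z \<Longrightarrow> r x z"
  unfolding setoid_def by blast

lemma fun_eq_via:
  assumes "setoid Y s" and "fun_eq X s f g" and "fun_eq X s f' g'" and "fun_eq X s g g'"
  shows "fun_eq X s f f'"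
  using assms unfolding fun_eq_def by (meson setoid_sym setoid_trans)

lemma eqWB_selfD:
  assumes "eqWB eqA B0 eqB tr v v"
  shows "eqA (node v) (node v)"
    and "\<And>b b'. b \<in> B0 (node v) \<Longrightarrow> b' \<in> B0 (node v) \<Longrightarrow> eqB (node v) (tr (node v) (node v) b) b'
           \<Longrightarrow> eqWB eqA B0 eqB tr (branch v b) (branch v b')"
  using assms by (cases rule: eqWB.cases; auto)+

locale family_setting =
  fixes A0 :: "'a set" and eqA :: "'a \<Rightarrow> 'a \<Rightarrow> bool"
    and B0 :: "'a \<Rightarrow> 'b set" and eqB :: "'a \<Rightarrow> 'b \<Rightarrow> 'b \<Rightarrow> bool"
    and tr :: "'a \<Rightarrow> 'a \<Rightarrow> 'b \<Rightarrow> 'b"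
  assumes setoid_A: "setoid A0 eqA"
    and family: "setoid_family A0 eqA B0 eqB tr"
begin

abbreviation eqW :: "('a, 'b) Wt \<Rightarrow> ('a, 'b) Wt \<Rightarrow> bool" where
  "eqW \<equiv> eqWB eqA B0 eqB tr"

lemma setoid_B: "eqA a a \<Longrightarrow> setoid (B0 a) (eqB a)"
  using family setoid_carrier[OF setoid_A] unfolding setoid_family_def by blast

lemma transport_refl: "eqA a a \<Longrightarrow> b \<in> B0 a \<Longrightarrow> eqB a (tr a a b) b"
  using family setoid_carrier[OF setoid_A] unfolding setoid_family_def fun_eq_def by auto

lemma eqW_branch:
  assumes v: "eqW v v" and bb': "eqB (node v) b b'"
  shows "eqW (branch v b) (branch v b')"
proof -
  have refl: "eqA (node v) (node v)"
    using eqWB_selfD(1)[OF v] .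
  have "b \<in> B0 (node v)" "b' \<in> B0 (node v)"
    using setoid_carrier[OF setoid_B[OF refl] bb'] by auto
  moreover have "eqB (node v) (tr (node v) (node v) b) b'"
    using setoid_trans[OF setoid_B[OF refl] transport_refl[OF refl] bb'] \<open>b \<in> B0 (node v)\<close> .
  ultimately show ?thesis
    using eqWB_selfD(2)[OF v] by blast
qed

lemma eqW_branch_self:
  assumes "eqW v v" and "s \<in> B0 (node v)"
  shows "eqW (branch v s) (branch v s)"
  using eqW_branch[OF assms(1)] setoid_refl[OF setoid_B[OF eqWB_selfD(1)[OF assms(1)]] assms(2)] .

lemma ext_fun_imS_eqB:
  assumes "eqW v v" and "ext_fun (B0 (node v)) (imS_eq eqA B0 eqB tr v) C0 eqC f"
  shows "ext_fun (B0 (node v)) (eqB (node v)) C0 eqC f"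
proof -
  have "imS_eq eqA B0 eqB tr v x y" if "eqB (node v) x y" for x y
    using setoid_carrier[OF setoid_B[OF eqWB_selfD(1)[OF assms(1)]] that]
      eqW_branch[OF assms(1) that] unfolding imS_eq_def by blast
  then show ?thesis
    using assms(2) unfolding ext_fun_def by blast
qed

end

locale algebra_setting = family_setting +
  fixes C0 :: "'c set" and eqC :: "'c \<Rightarrow> 'c \<Rightarrow> bool"
    and aC :: "'a \<Rightarrow> ('b \<Rightarrow> 'c) \<Rightarrow> 'c"
  assumes algebra: "PB_algebra A0 eqA B0 eqB tr C0 eqC aC"
begin

lemma setoid_C: "setoid C0 eqC"
  using algebra unfolding PB_algebra_def by blast

lemma algebra_cong:
  assumes a: "eqA a a"
    and f: "ext_fun (B0 a) (eqB a) C0 eqC f" and g: "ext_fun (B0 a) (eqB a) C0 eqC g"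
    and fg: "fun_eq (B0 a) eqC f g"
  shows "eqC (aC a f) (aC a g)"
proof -
  have "eqC (f b) (g (tr a a b))" if b: "b \<in> B0 a" for b
  proof -
    have "eqC (g (tr a a b)) (g b)"
      using g transport_refl[OF a b] unfolding ext_fun_def by blast
    moreover have "eqC (f b) (g b)"
      using fg b unfolding fun_eq_def by blast
    ultimately show ?thesis
      using setoid_C by (meson setoid_sym setoid_trans)
  qed
  then have "fun_eq (B0 a) eqC f (g \<circ> tr a a)"
    unfolding fun_eq_def by simp
  then show ?thesis
    using algebra a f g unfolding PB_algebra_def by blast
qed

lemma recst_cong:
  assumes w: "eqW w w"
    and F: "cohmap eqA B0 eqB tr C0 eqC w F" and F': "cohmap eqA B0 eqB tr C0 eqC w F'"
    and FF': "\<And>s. s \<in> B0 (node w) \<Longrightarrow> fun_eq (B0 (node (branch w s))) eqC (F s) (F' s)"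
  shows "fun_eq (B0 (node w)) eqC (recst aC w F) (recst aC w F')"
  unfolding fun_eq_def recst_def
proof
  fix s assume s: "s \<in> B0 (node w)"
  have ws: "eqW (branch w s) (branch w s)"
    using eqW_branch_self[OF w s] .
  show "eqC (aC (node (branch w s)) (F s)) (aC (node (branch w s)) (F' s))"
    using F F' s unfolding cohmap_def
    by (blast intro: algebra_cong eqWB_selfD(1)[OF ws] FF' ext_fun_imS_eqB[OF ws])
qed

lemma RecDef_unique:
  assumes "RecDef eqA B0 eqB tr C0 eqC aC w k" and "eqW w w"
    and "RecDef eqA B0 eqB tr C0 eqC aC w k'"
  shows "fun_eq (B0 (node w)) eqC k k'"
  using assms
proof (induction w k arbitrary: k' rule: RecDef.induct)
  case (1 w F k)
  from "1.prems"(2) obtain F' where F': "cohmap eqA B0 eqB tr C0 eqC w F'"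
    and k': "fun_eq (B0 (node w)) eqC k' (recst aC w F')"
    and branches: "\<And>s. s \<in> B0 (node w) \<Longrightarrow> RecDef eqA B0 eqB tr C0 eqC aC (branch w s) (F' s)"
    by (cases rule: RecDef.cases) auto
  have "fun_eq (B0 (node (branch w s))) eqC (F s) (F' s)" if s: "s \<in> B0 (node w)" for s
    using "1.IH"[OF s eqW_branch_self[OF "1.prems"(1) s] branches[OF s]] .
  then have "fun_eq (B0 (node w)) eqC (recst aC w F) (recst aC w F')"
    using recst_cong "1.prems"(1) "1.hyps"(1) F' by blast
  then show ?case
    using fun_eq_via[OF setoid_C "1.hyps"(2) k'] by blast
qed

end

theorem lemma3p11:
  fixes A0 :: "'a set" and eqA :: "'a \<Rightarrow> 'a \<Rightarrow> bool"
    and B0 :: "'a \<Rightarrow> 'b set" and eqB :: "'a \<Rightarrow> 'b \<Rightarrow> 'b \<Rightarrow> bool"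
    and tr :: "'a \<Rightarrow> 'a \<Rightarrow> 'b \<Rightarrow> 'b"
    and C0 :: "'c set" and eqC :: "'c \<Rightarrow> 'c \<Rightarrow> bool"
    and aC :: "'a \<Rightarrow> ('b \<Rightarrow> 'c) \<Rightarrow> 'c"
    and w :: "('a, 'b) Wt" and k k' :: "'b \<Rightarrow> 'c"
  assumes "setoid A0 eqA"
    and "setoid_family A0 eqA B0 eqB tr"
    and "PB_algebra A0 eqA B0 eqB tr C0 eqC aC"
    and "eqWB eqA B0 eqB tr w w"
    and "ext_fun (B0 (node w)) (imS_eq eqA B0 eqB tr w) C0 eqC k"
    and "ext_fun (B0 (node w)) (imS_eq eqA B0 eqB tr w) C0 eqC k'"
  shows "RecDef eqA B0 eqB tr C0 eqC aC w k \<longrightarrow> RecDef eqA B0 eqB tr C0 eqC aC w k'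
           \<longrightarrow> fun_eq (B0 (node w)) eqC k k'"
proof -
  interpret algebra_setting A0 eqA B0 eqB tr C0 eqC aC
    using assms(1-3) by unfold_locales
  show ?thesis
    using RecDef_unique assms(4) by blast
qed

end
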